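(* Let $(G,\mathbf p)$ be a framework (with $\mathbf p$ pinned) such that $\dim(K)=1$, and let $k\ge1$ be an integer. If $(G,\mathbf p)$ has a $(1,k)$-flex, then it has a $(1,k)$-flex of the form $$\mathbf p(t)=\mathbf p+\mathbf p't+\mathbf p''t^2+\cdots+\mathbf p^{(k)}t^k$$ (a polynomial in $t$ with configuration coefficients $\mathbf p',\dots,\mathbf p^{(k)}$) with $\mathbf p^{(l)}\in\overline K$ for all $2\le l\le k$.
   Context: Fix a dimension $d$. A configuration is $\mathbf p=(\mathbf p_1,\dots,\mathbf p_n)$, $\mathbf p_i\in\mathbb R^d$; a framework $(G,\mathbf p)$ consists of a graph $G$ on $\{1,\dots,n\}$ and a configuration with $\mathbf p_i\ne\mathbf p_j$ on edges. A configuration $\mathbf q$ is in $\ell$-pinned position if $\mathbf q_1=0$ and, for $2\le i\le\ell+1$, $\mathbf q_i\in\mathrm{span}(e_1,\dots,e_{i-1})$; these form the $\ell$-pinned configuration space. If $\mathbf p$ has $\ell$-dimensional affine span, it is pinned if $\mathbf p_1,\dots,\mathbf p_{\ell+1}$ are affinely independent and $\mathbf p$ is in $\ell$-pinned position. All trajectories and flexes are $\ell$-pinned. A trajectory at $\mathbf p$ is an analytic non-constant map $t\mapsto\mathbf p(t)$ into $\ell$-pinned configuration space, $t\in[0,\varepsilon]$, $\mathbf p(0)=\mathbf p$. A $C^k$ function $\varphi(t)$ is $k$-vanishing if $\varphi^{(i)}(0)=0$ for $1\le i\le k$, and $k$-active if $(k-1)$-vanishing but not $k$-vanishing. With $\mathbf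 m(\mathbf q)=(|\mathbf q_i-\mathbf q_j|^2)_{ij\in E(G)}$, a $(j,k)$-flex is a $j$-active trajectory at $\mathbf p$ with $\mathbf m(\mathbf p(t))$ $k$-vanishing. $K$ is the linear space of $\ell$-pinned $\mathbf p'$ with $(\mathbf p_v-\mathbf p_w)\cdot(\mathbf p'_v-\mathbf p'_w)=0$ for all edges $vw$, and $\overline K$ is a fixed complementary linear subspace of $K$ in $\ell$-pinned configuration space. *)

theory Defs
  imports "HOL-Analysis.Analysis"
begin

text \<open>Vertices are the elements of a finite linearly ordered type 'n (vertex number
i in the paper = the vertex of rank i-1); coordinates of R^d are the elements of a finite
linearly ordered type 'd (basis vector e_i = axis of the coordinate of rank i-1).\<close>

definition vrank :: "'a::{finite,linorder} \<Rightarrow> nat" where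
  "vrank v = card {u. u < v}"

definition pinned_pos :: "nat \<Rightarrow> real^'d::{finite,linorder}^'n::{finite,linorder} \<Rightarrow> bool" where
  "pinned_pos l q \<longleftrightarrow>
     (\<forall>v. vrank v = 0 \<longrightarrow> q $ v = 0) \<and>
     (\<forall>v. 1 \<le> vrank v \<and> vrank v \<le> l \<longrightarrow>
          q $ v \<in> span {axis c 1 | c. vrank c < vrank v})"

definition pinned_space :: "nat \<Rightarrow> (real^'d::{finite,linorder}^'n::{finite,linorder}) set" where
  "pinned_space l = {q. pinned_pos l q}"

definition pinned_config :: "nat \<Rightarrow> real^'d::{finite,linorder}^'n::{finite,linorder} \<Rightarrow> bool" where
  "pinned_config l p \<longleftrightarrow>
     inj_on (\<lambda>v. p $ v) {v. vrank v \<le> l} \<and>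
     \<not> affine_dependent ((\<lambda>v. p $ v) ` {v. vrank v \<le> l}) \<and>
     pinned_pos l p"

definition is_framework :: "('n \<times> 'n) set \<Rightarrow> real^'d^'n \<Rightarrow> bool" where
  "is_framework E p \<longleftrightarrow> (\<forall>(v,w)\<in>E. p $ v \<noteq> p $ w)"

definition real_analytic_on :: "(real \<Rightarrow> 'a::real_normed_vector) \<Rightarrow> real set \<Rightarrow> bool" where
  "real_analytic_on f S \<longleftrightarrow>
     (\<forall>x\<in>S. \<exists>r>0. \<exists>a::nat \<Rightarrow> 'a.
        \<forall>y\<in>S. \<bar>y - x\<bar> < r \<longrightarrow> (\<lambda>i. (y - x) ^ i *\<^sub>R a i) sums f y)"

fun nderiv :: "real set \<Rightarrow> nat \<Rightarrow> (real \<Rightarrow> 'a::real_normed_vector) \<Rightarrow> real \<Rightarrow> 'a" where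
  "nderiv S 0 f = f"
| "nderiv S (Suc i) f = (\<lambda>t. vector_derivative (nderiv S i f) (at t within S))"

definition vanishing :: "real set \<Rightarrow> nat \<Rightarrow> (real \<Rightarrow> 'a::real_normed_vector) \<Rightarrow> bool" where
  "vanishing S k \<phi> \<longleftrightarrow> (\<forall>i. 1 \<le> i \<and> i \<le> k \<longrightarrow> nderiv S i \<phi> 0 = 0)"

definition active :: "real set \<Rightarrow> nat \<Rightarrow> (real \<Rightarrow> 'a::real_normed_vector) \<Rightarrow> bool" where
  "active S k \<phi> \<longleftrightarrow> vanishing S (k - 1) \<phi> \<and> \<not> vanishing S k \<phi>"

definition trajectory :: "nat \<Rightarrow> real^'d::{finite,linorder}^'n::{finite,linorder}
    \<Rightarrow> (real \<Rightarrow> real^'d::{finite,linorder}^'n::{finite,linorder}) \<Rightarrow> real \<Rightarrow> bool" where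
  "trajectory l p f \<epsilon> \<longleftrightarrow>
     \<epsilon> > 0 \<and> real_analytic_on f {0..\<epsilon>} \<and> (\<forall>t\<in>{0..\<epsilon>}. pinned_pos l (f t)) \<and>
     f 0 = p \<and> (\<exists>t\<in>{0..\<epsilon>}. f t \<noteq> p)"

definition flex :: "('n \<times> 'n) set \<Rightarrow> nat \<Rightarrow> real^'d::{finite,linorder}^'n::{finite,linorder}
    \<Rightarrow> nat \<Rightarrow> nat \<Rightarrow> (real \<Rightarrow> real^'d::{finite,linorder}^'n::{finite,linorder}) \<Rightarrow> bool" where
  "flex E l p j k f \<longleftrightarrow>
     (\<exists>\<epsilon>. trajectory l p f \<epsilon> \<and> active {0..\<epsilon>} j f \<and>
        (\<forall>(v,w)\<in>E. vanishing {0..\<epsilon>} k (\<lambda>t. (norm (f t $ v - f t $ w))\<^sup>2)))"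

definition Kspace :: "('n \<times> 'n) set \<Rightarrow> nat \<Rightarrow> real^'d::{finite,linorder}^'n::{finite,linorder}
    \<Rightarrow> (real^'d::{finite,linorder}^'n::{finite,linorder}) set" where
  "Kspace E l p = {p'. pinned_pos l p' \<and> (\<forall>(v,w)\<in>E. (p $ v - p $ w) \<bullet> (p' $ v - p' $ w) = 0)}"

end

theory Submission
  imports Defs "HOL-Computational_Algebra.Polynomial"
begin

text \<open>Expand the flex as a power series \<open>t \<mapsto> \<Sum>i. t ^ i *\<^sub>R A i\<close> at \<open>0\<close>. The first \<open>k\<close> derivatives
  of the squared edge lengths at \<open>0\<close> only involve \<open>A 0, \<dots>, A k\<close>, and the first one says \<open>A 1 \<in> K\<close>,
  so \<open>K\<close> is the line spanned by \<open>A 1\<close>. Truncate the series to a polynomial. Reparametrising it by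
  \<open>s t = t - \<mu> t ^ m\<close> with \<open>m \<ge> 2\<close> keeps \<open>A 0, \<dots>, A (m - 1)\<close> and replaces \<open>A m\<close> by
  \<open>A m - \<mu> *\<^sub>R A 1\<close>; the squared edge lengths are composed with \<open>s\<close>, and as \<open>s 0 = 0\<close> they stay
  \<open>k\<close>-vanishing. Choosing \<open>\<mu>\<close> so that the new \<open>A m\<close> lies in \<open>Kbar\<close>, for \<open>m = 2, \<dots>, k\<close>, and
  dropping the terms of degree above \<open>k\<close> yields the polynomial flex.\<close>

lemma funpow_diffs: "(diffs ^^ n) c i = pochhammer (of_nat (Suc i)) n * (c (i + n) :: 'a::comm_ring_1)"
proof (induction n arbitrary: i)
  case (Suc n)
  then show ?case
    by (simp add: diffs_def pochhammer_rec algebra_simps)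
qed simp

lemma funpow_diffs_0: "(diffs ^^ n) c 0 = fact n * (c n :: 'a::{comm_ring_1,ring_char_0})"
  by (simp add: funpow_diffs pochhammer_fact)

lemma summable_funpow_diffs_powser:
  fixes c :: "nat \<Rightarrow> 'a::{real_normed_field,banach}"
  assumes "\<And>y. norm y < r \<Longrightarrow> summable (\<lambda>i. c i * y ^ i)" "norm y < r"
  shows "summable (\<lambda>i. (diffs ^^ n) c i * y ^ i)"
  using assms(2)
proof (induction n arbitrary: y)
  case (Suc n)
  then show ?case
    using termdiff_converges[of y r "(diffs ^^ n) c"] by simp
qed (use assms(1) in simp)

lemma nderiv_eqI:
  fixes F :: "real \<Rightarrow> 'a::euclidean_space"
  assumes "0 < r" "r \<le> \<epsilon>"
    and "\<And>y. 0 \<le> y \<Longrightarrow> y < r \<Longrightarrow> F y = G 0 y"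
    and deriv: "\<And>n y. 0 \<le> y \<Longrightarrow> y < r \<Longrightarrow> (G n has_vector_derivative G (Suc n) y) (at y within {0..\<epsilon>})"
    and "0 \<le> y" "y < r"
  shows "nderiv {0..\<epsilon>} n F y = G n y"
  using assms(5,6)
proof (induction n arbitrary: y)
  case 0
  then show ?case
    using assms(3) by simp
next
  case (Suc n)
  have "(nderiv {0..\<epsilon>} n F has_vector_derivative G (Suc n) y) (at y within {0..\<epsilon>})"
    by (rule has_vector_derivative_transform_within[OF deriv[OF Suc.prems], of "r - y"])
      (use Suc assms in \<open>auto simp: dist_real_def\<close>)
  then have "vector_derivative (nderiv {0..\<epsilon>} n F) (at y within {0..\<epsilon>}) = G (Suc n) y"
    by (rule vector_derivative_within_closed_interval[rotated 2]) (use Suc.prems assms(1,2) in auto)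
  then show ?case
    by simp
qed

lemma nderiv_powser:
  fixes F :: "real \<Rightarrow> 'a::euclidean_space"
  assumes "0 < r" "r \<le> \<epsilon>"
    and sums: "\<And>y. 0 \<le> y \<Longrightarrow> y < r \<Longrightarrow> (\<lambda>i. y ^ i *\<^sub>R A i) sums F y"
  shows "nderiv {0..\<epsilon>} n F 0 = fact n *\<^sub>R A n"
proof -
  define P where "P n b y = (\<Sum>i. (diffs ^^ n) (\<lambda>i. A i \<bullet> b) i * y ^ i)" for n b y
  define G where "G n y = (\<Sum>b\<in>Basis. P n b y *\<^sub>R b)" for n y
  have coord_sums: "(\<lambda>i. (A i \<bullet> b) * y ^ i) sums (F y \<bullet> b)" if "0 \<le> y" "y < r" for b y
    using bounded_linear.sums[OF bounded_linear_inner_left sums[OF that]]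
    by (simp add: mult.commute)
  have coord_summable: "summable (\<lambda>i. (A i \<bullet> b) * y ^ i)" if "norm y < r" for b y
  proof -
    have "summable (\<lambda>i. (A i \<bullet> b) * ((\<bar>y\<bar> + r) / 2) ^ i)"
      using coord_sums[of "(\<bar>y\<bar> + r) / 2"] that by (auto intro: sums_summable)
    then show ?thesis
      by (rule powser_inside) (use that in auto)
  qed
  have deriv: "(P n b has_vector_derivative P (Suc n) b y) (at y within {0..\<epsilon>})"
    if "\<bar>y\<bar> < r" for n b y
    using termdiffs_strong'[of r "(diffs ^^ n) (\<lambda>i. A i \<bullet> b)" y]
      summable_funpow_diffs_powser[OF coord_summable] that
    unfolding P_def[abs_def]
    by (simp add: has_real_derivative_iff_has_vector_derivative has_vector_derivative_at_within)
  have "nderiv {0..\<epsilon>} n F 0 = G n 0"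
  proof (rule nderiv_eqI[OF assms(1,2)])
    show "F y = G 0 y" if "0 \<le> y" "y < r" for y
      using coord_sums that by (simp add: G_def P_def sums_iff euclidean_representation)
    show "(G n has_vector_derivative G (Suc n) y) (at y within {0..\<epsilon>})"
      if "0 \<le> y" "y < r" for n y
      unfolding G_def[abs_def] using that
      by (intro has_vector_derivative_sum deriv
          bounded_linear.has_vector_derivative[OF bounded_linear_scaleR_left]) simp
  qed (use assms in auto)
  also have "\<dots> = fact n *\<^sub>R (\<Sum>b\<in>Basis. (A n \<bullet> b) *\<^sub>R b)"
    by (simp add: G_def P_def funpow_diffs_0 scaleR_sum_right)
  finally show ?thesis
    by (simp add: euclidean_representation)
qed

lemma powser_coeffs_unique:
  fixes A B :: "nat \<Rightarrow> 'a::euclidean_space"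
  assumes "0 < r"
    and "\<And>y. 0 \<le> y \<Longrightarrow> y < r \<Longrightarrow> (\<lambda>i. y ^ i *\<^sub>R A i) sums F y"
    and "\<And>y. 0 \<le> y \<Longrightarrow> y < r \<Longrightarrow> (\<lambda>i. y ^ i *\<^sub>R B i) sums F y"
  shows "A = B"
proof
  fix n
  have "fact n *\<^sub>R A n = fact n *\<^sub>R B n"
    using nderiv_powser[of r r A F n] nderiv_powser[of r r B F n] assms by simp
  then show "A n = B n"
    by simp
qed

lemma powser_coeffs_in_subspace:
  fixes A :: "nat \<Rightarrow> 'a::euclidean_space"
  assumes "subspace S" "0 < r"
    and sums: "\<And>y. 0 \<le> y \<Longrightarrow> y < r \<Longrightarrow> (\<lambda>i. y ^ i *\<^sub>R A i) sums F y"
    and in_S: "\<And>y. 0 \<le> y \<Longrightarrow> y < r \<Longrightarrow> F y \<in> S"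
  shows "A i \<in> S"
proof -
  obtain x z where "x \<in> span S" and z_orth: "\<And>w. w \<in> span S \<Longrightarrow> orthogonal z w"
    and "A i = x + z"
    using orthogonal_subspace_decomp_exists[of S "A i"] by auto
  have "(\<lambda>j. y ^ j *\<^sub>R (A j \<bullet> z)) sums 0" if "0 \<le> y" "y < r" for y
  proof -
    have "(\<lambda>j. y ^ j *\<^sub>R (A j \<bullet> z)) sums (F y \<bullet> z)"
      using bounded_linear.sums[OF bounded_linear_inner_left sums[OF that]] by simp
    moreover have "orthogonal z (F y)"
      using z_orth in_S[OF that] by (simp add: span_base)
    ultimately show ?thesis
      by (simp add: orthogonal_def inner_commute)
  qed
  moreover have "(\<lambda>j. y ^ j *\<^sub>R (0::real)) sums 0" for y
    by simp
  ultimately have "(\<lambda>j. A j \<bullet> z) = (\<lambda>j. 0)"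
    by (intro powser_coeffs_unique[OF \<open>0 < r\<close>])
  then have "A i \<bullet> z = 0"
    by (simp add: fun_eq_iff)
  moreover have "x \<bullet> z = 0"
    using z_orth \<open>x \<in> span S\<close> by (simp add: orthogonal_def inner_commute)
  ultimately have "z = 0"
    using \<open>A i = x + z\<close> by (simp add: inner_add_left)
  then show ?thesis
    using \<open>A i = x + z\<close> \<open>x \<in> span S\<close> span_eq_iff[THEN iffD2, OF \<open>subspace S\<close>] by simp
qed

lemma powser_Cauchy_product_sums:
  fixes c d :: "nat \<Rightarrow> 'a::{real_normed_field,banach}"
  assumes "(\<lambda>i. c i * y ^ i) sums U" "(\<lambda>i. d i * y ^ i) sums V"
    and "summable (\<lambda>i. c i * z ^ i)" "summable (\<lambda>i. d i * z ^ i)" "norm y < norm z"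
  shows "(\<lambda>n. y ^ n * (\<Sum>i\<le>n. c i * d (n - i))) sums (U * V)"
proof -
  have "(\<lambda>n. \<Sum>i\<le>n. (c i * y ^ i) * (d (n - i) * y ^ (n - i))) sums (U * V)"
    using Cauchy_product_sums[OF powser_insidea[OF assms(3,5)] powser_insidea[OF assms(4,5)]]
      assms(1,2) by (simp add: sums_iff)
  moreover have "(\<Sum>i\<le>n. (c i * y ^ i) * (d (n - i) * y ^ (n - i)))
      = y ^ n * (\<Sum>i\<le>n. c i * d (n - i))" for n
    unfolding sum_distrib_left by (rule sum.cong) (auto simp: algebra_simps simp flip: power_add)
  ultimately show ?thesis
    by simp
qed

lemma powser_inner_sums:
  fixes a b :: "nat \<Rightarrow> 'a::euclidean_space"
  assumes "(\<lambda>i. y ^ i *\<^sub>R a i) sums S" "(\<lambda>i. y ^ i *\<^sub>R b i) sums T"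
    and "summable (\<lambda>i. z ^ i *\<^sub>R a i)" "summable (\<lambda>i. z ^ i *\<^sub>R b i)" "\<bar>y\<bar> < \<bar>z\<bar>"
  shows "(\<lambda>n. y ^ n * (\<Sum>i\<le>n. a i \<bullet> b (n - i))) sums (S \<bullet> T)"
proof -
  have coord_sums: "(\<lambda>i. (c i \<bullet> e) * y ^ i) sums (U \<bullet> e)"
    if "(\<lambda>i. y ^ i *\<^sub>R c i) sums U" for c U e
    using bounded_linear.sums[OF bounded_linear_inner_left that] by (simp add: mult.commute)
  have coord_summable: "summable (\<lambda>i. (c i \<bullet> e) * z ^ i)"
    if "summable (\<lambda>i. z ^ i *\<^sub>R c i)" for c e
    using bounded_linear.summable[OF bounded_linear_inner_left that] by (simp add: mult.commute)
  have "(\<lambda>n. \<Sum>e\<in>Basis. y ^ n * (\<Sum>i\<le>n. (a i \<bullet> e) * (b (n - i) \<bullet> e)))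
      sums (\<Sum>e\<in>Basis. (S \<bullet> e) * (T \<bullet> e))"
    using assms(5)
    by (intro sums_sum powser_Cauchy_product_sums[where z = z] coord_sums coord_summable assms(1-4))
      simp
  moreover have "a i \<bullet> b j = (\<Sum>e\<in>Basis. (a i \<bullet> e) * (b j \<bullet> e))" for i j
    by (rule euclidean_inner)
  ultimately show ?thesis
    by (simp add: euclidean_inner[of S T] sum_distrib_left sum.swap[of _ Basis])
qed

lemma real_analytic_on_polynomial:
  fixes C :: "nat \<Rightarrow> 'a::real_normed_vector"
  shows "real_analytic_on (\<lambda>y. \<Sum>i\<le>k. y ^ i *\<^sub>R C i) S"
  unfolding real_analytic_on_def
proof (intro ballI exI conjI allI impI)
  fix x y :: real
  define D where "D j = (\<Sum>i\<le>k. (of_nat (i choose j) * x ^ (i - j)) *\<^sub>R C i)" for j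
  have "(\<lambda>j. (y - x) ^ j *\<^sub>R D j) sums (\<Sum>j\<le>k. (y - x) ^ j *\<^sub>R D j)"
    by (rule sums_finite) (auto simp: D_def binomial_eq_0 intro!: sum.neutral)
  moreover have "(\<Sum>j\<le>k. (y - x) ^ j *\<^sub>R D j) = (\<Sum>i\<le>k. y ^ i *\<^sub>R C i)"
  proof -
    have "(\<Sum>j\<le>k. (y - x) ^ j *\<^sub>R D j)
        = (\<Sum>j\<le>k. \<Sum>i\<le>k. ((y - x) ^ j * (of_nat (i choose j) * x ^ (i - j))) *\<^sub>R C i)"
      by (simp add: D_def scaleR_sum_right)
    also have "\<dots> = (\<Sum>i\<le>k. \<Sum>j\<le>k. ((y - x) ^ j * (of_nat (i choose j) * x ^ (i - j))) *\<^sub>R C i)"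
      by (rule sum.swap)
    also have "\<dots> = (\<Sum>i\<le>k. (\<Sum>j\<le>k. (y - x) ^ j * (of_nat (i choose j) * x ^ (i - j))) *\<^sub>R C i)"
      by (simp add: scaleR_sum_left)
    also have "\<dots> = (\<Sum>i\<le>k. ((y - x) + x) ^ i *\<^sub>R C i)"
    proof (rule sum.cong[OF refl])
      fix i
      assume "i \<in> {..k}"
      then have "(\<Sum>j\<le>k. (y - x) ^ j * (of_nat (i choose j) * x ^ (i - j)))
          = (\<Sum>j\<le>i. (y - x) ^ j * (of_nat (i choose j) * x ^ (i - j)))"
        by (intro sum.mono_neutral_right) (auto simp: binomial_eq_0)
      then show "(\<Sum>j\<le>k. (y - x) ^ j * (of_nat (i choose j) * x ^ (i - j))) *\<^sub>R C i
          = ((y - x) + x) ^ i *\<^sub>R C i"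
        using binomial_ring[of "y - x" x i] by (simp add: mult_ac)
    qed
    finally show ?thesis
      by simp
  qed
  ultimately show "(\<lambda>j. (y - x) ^ j *\<^sub>R D j) sums (\<Sum>i\<le>k. y ^ i *\<^sub>R C i)"
    by simp
qed (rule zero_less_one)

lemma real_analytic_on_powser_at_0:
  assumes "real_analytic_on f {0..\<epsilon>}" "0 < \<epsilon>"
  obtains r A where "0 < r" "r \<le> \<epsilon>" "\<And>y. 0 \<le> y \<Longrightarrow> y < r \<Longrightarrow> (\<lambda>i. y ^ i *\<^sub>R A i) sums f y"
proof -
  obtain r0 A where "0 < r0"
    and A: "\<forall>y\<in>{0..\<epsilon>}. \<bar>y - 0\<bar> < r0 \<longrightarrow> (\<lambda>i. (y - 0) ^ i *\<^sub>R A i) sums f y"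
    using assms unfolding real_analytic_on_def by force
  show ?thesis
    by (rule that[of "min r0 \<epsilon>" A]) (use \<open>0 < r0\<close> assms(2) A in auto)
qed

lemma sums_polynomial:
  fixes a :: "nat \<Rightarrow> 'a::real_normed_vector"
  shows "(\<lambda>i. y ^ i *\<^sub>R (if i \<le> k then a i else 0)) sums (\<Sum>i\<le>k. y ^ i *\<^sub>R a i)"
proof -
  have "(\<lambda>i. y ^ i *\<^sub>R (if i \<le> k then a i else 0)) sums (\<Sum>i\<le>k. y ^ i *\<^sub>R (if i \<le> k then a i else 0))"
    by (rule sums_finite) auto
  then show ?thesis
    by simp
qed

lemma coeff_power_eq_0:
  fixes s :: "'a::comm_semiring_1 poly"
  assumes "coeff s 0 = 0" "n < j"
  shows "coeff (s ^ j) n = 0"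
proof -
  have "monom 1 1 dvd s"
    using assms(1) by (simp add: monom_1_dvd_iff')
  then have "monom 1 j dvd s ^ j"
    using dvd_power_same[of "monom 1 1" s j] by (simp add: monom_power)
  then show ?thesis
    using assms(2) by (simp add: monom_1_dvd_iff')
qed

lemma pcompose_power: "(p ^ n) \<circ>\<^sub>p s = (p \<circ>\<^sub>p s) ^ n"
  by (induction n) (simp_all add: pcompose_1 pcompose_mult)

lemma coeff_pcompose_expand:
  fixes q :: "'a::comm_semiring_1 poly"
  assumes "degree q \<le> N"
  shows "coeff (q \<circ>\<^sub>p s) n = (\<Sum>j\<le>N. coeff q j * coeff (s ^ j) n)"
proof -
  have "q \<circ>\<^sub>p s = (\<Sum>j\<le>N. monom (coeff q j) j) \<circ>\<^sub>p s"
    using poly_as_sum_of_monoms'[OF assms] by simp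
  also have "\<dots> = (\<Sum>j\<le>N. smult (coeff q j) (s ^ j))"
    by (simp add: pcompose_sum pcompose_smult monom_altdef pcompose_power pcompose_pCons)
  finally show ?thesis
    by (simp add: coeff_sum)
qed

lemma coeff_pcompose_eq_0:
  fixes q s :: "'a::comm_semiring_1 poly"
  assumes q: "\<And>j. j \<in> {1..k} \<Longrightarrow> coeff q j = 0" and "coeff s 0 = 0" and "n \<in> {1..k}"
  shows "coeff (q \<circ>\<^sub>p s) n = 0"
proof -
  have "coeff q j * coeff (s ^ j) n = 0" for j
  proof (cases "j = 0")
    case True
    then show ?thesis
      using \<open>n \<in> {1..k}\<close> by (simp add: coeff_1)
  next
    case False
    then show ?thesis
      using q[of j] coeff_power_eq_0[OF \<open>coeff s 0 = 0\<close>, of n j] \<open>n \<in> {1..k}\<close>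
      by (cases "j \<le> k") auto
  qed
  then show ?thesis
    by (simp add: coeff_pcompose_expand[OF order_refl])
qed

lemma coeff_X_plus_monom_power:
  fixes \<mu> :: "'a::comm_semiring_1"
  assumes "2 \<le> m" "j \<le> m"
  shows "coeff (([:0, 1:] + monom \<mu> m) ^ i) j
    = (if j = i then 1 else 0) + (if i = 1 \<and> j = m then \<mu> else 0)"
  using assms(2)
proof (induction i arbitrary: j)
  case 0
  then show ?case
    using assms(1) by simp
next
  case (Suc i)
  let ?s = "[:0, 1:] + monom \<mu> m"
  have "coeff (?s ^ Suc i) j = coeff (pCons 0 (?s ^ i)) j + coeff (monom \<mu> m * ?s ^ i) j"
    by (simp add: distrib_right)
  also have "coeff (monom \<mu> m * ?s ^ i) j = (if j = m \<and> i = 0 then \<mu> else 0)"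
    using Suc.prems Suc.IH[of 0] assms(1) by (auto simp: coeff_monom_mult)
  also have "coeff (pCons 0 (?s ^ i)) j = (if j = Suc i then 1 else 0)"
    using Suc by (cases j) auto
  finally show ?case
    by auto
qed

lemma coeff_pcompose_X_plus_monom:
  fixes q :: "'a::comm_semiring_1 poly"
  assumes "2 \<le> m" "j \<le> m"
  shows "coeff (q \<circ>\<^sub>p ([:0, 1:] + monom \<mu> m)) j = coeff q j + (if j = m then \<mu> * coeff q 1 else 0)"
proof -
  define N where "N = max (degree q) m"
  have "coeff (q \<circ>\<^sub>p ([:0, 1:] + monom \<mu> m)) j
      = (\<Sum>i\<le>N. coeff q i * ((if j = i then 1 else 0) + (if i = 1 \<and> j = m then \<mu> else 0)))"
    using assms by (simp add: coeff_pcompose_expand[of q N] N_def coeff_X_plus_monom_power)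
  also have "\<dots> = (\<Sum>i\<le>N. (if i = j then coeff q i else 0)
      + (if i = 1 then (if j = m then \<mu> * coeff q 1 else 0) else 0))"
    using assms(1) by (intro sum.cong) (auto simp: mult.commute)
  also have "\<dots> = coeff q j + (if j = m then \<mu> * coeff q 1 else 0)"
    using assms by (auto simp: sum.distrib N_def)
  finally show ?thesis .
qed

lemma dim_1_decomp:
  fixes V :: "'a::euclidean_space set"
  assumes "dim V = 1" "c \<in> V" "c \<noteq> 0" "x \<in> {u + y | u y. u \<in> V \<and> y \<in> T}"
  shows "\<exists>\<mu>. x - \<mu> *\<^sub>R c \<in> T"
proof -
  have "V \<subseteq> span {c}"
    by (rule card_ge_dim_independent) (use assms in \<open>auto simp: dependent_single\<close>)
  moreover obtain u y where "x = u + y" "u \<in> V" "y \<in> T"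
    using assms(4) by blast
  ultimately obtain \<mu> where "u = \<mu> *\<^sub>R c"
    by (auto simp: span_singleton)
  then show ?thesis
    using \<open>x = u + y\<close> \<open>y \<in> T\<close> by (intro exI[of _ \<mu>]) simp
qed

definition edge_inner :: "'n::finite \<Rightarrow> 'n \<Rightarrow> real^'d::finite^'n \<Rightarrow> real^'d^'n \<Rightarrow> real" where
  "edge_inner v w x y = (x $ v - x $ w) \<bullet> (y $ v - y $ w)"

text \<open>The inner sum is the \<open>n\<close>-th Taylor coefficient at \<open>0\<close> of the squared length of the
  edge \<open>vw\<close> along \<open>t \<mapsto> \<Sum>i. t ^ i *\<^sub>R a i\<close>.\<close>

definition edge_lengths_vanish ::
    "('n::finite \<times> 'n) set \<Rightarrow> nat \<Rightarrow> (nat \<Rightarrow> real^'d::finite^'n) \<Rightarrow> bool" where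
  "edge_lengths_vanish E k a \<longleftrightarrow>
    (\<forall>(v, w)\<in>E. \<forall>n\<in>{1..k}. (\<Sum>i\<le>n. edge_inner v w (a i) (a (n - i))) = 0)"

lemma edge_lengths_vanish_cong:
  assumes "\<And>i. i \<le> k \<Longrightarrow> a i = b i"
  shows "edge_lengths_vanish E k a \<longleftrightarrow> edge_lengths_vanish E k b"
proof -
  have "(\<Sum>i\<le>n. edge_inner v w (a i) (a (n - i))) = (\<Sum>i\<le>n. edge_inner v w (b i) (b (n - i)))"
    if "n \<le> k" for v w n
    using that assms by (intro sum.cong) auto
  then show ?thesis
    by (auto simp: edge_lengths_vanish_def)
qed

lemma sums_sq_edge_length:
  fixes F :: "real \<Rightarrow> real^'d::finite^'n::finite"
  assumes sums: "\<And>y. 0 \<le> y \<Longrightarrow> y < r \<Longrightarrow> (\<lambda>i. y ^ i *\<^sub>R A i) sums F y"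
    and "0 \<le> y" "y < r"
  shows "(\<lambda>n. y ^ n *\<^sub>R (\<Sum>i\<le>n. edge_inner v w (A i) (A (n - i))))
    sums (norm (F y $ v - F y $ w))\<^sup>2"
proof -
  have diff_sums: "(\<lambda>i. x ^ i *\<^sub>R (A i $ v - A i $ w)) sums (F x $ v - F x $ w)"
    if "0 \<le> x" "x < r" for x
    using sums_diff[OF bounded_linear.sums[OF bounded_linear_vec_nth sums[OF that]]
        bounded_linear.sums[OF bounded_linear_vec_nth sums[OF that]]]
    by (simp add: scaleR_diff_right)
  have "summable (\<lambda>i. ((y + r) / 2) ^ i *\<^sub>R (A i $ v - A i $ w))"
    using diff_sums[of "(y + r) / 2"] assms by (auto intro: sums_summable)
  from powser_inner_sums[OF diff_sums[OF assms(2,3)] diff_sums[OF assms(2,3)] this this]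
  show ?thesis
    using assms by (simp add: edge_inner_def power2_norm_eq_inner)
qed

lemma subspace_pinned_space: "subspace (pinned_space l)"
  unfolding subspace_def pinned_space_def pinned_pos_def
  by (auto intro: span_0 span_add span_scale)

lemma flex_powser_coeffs:
  assumes "flex E l p 1 k f"
  obtains A where "A 0 = p" "A 1 \<noteq> 0" "\<And>i. A i \<in> pinned_space l" "edge_lengths_vanish E k A"
proof -
  obtain \<epsilon> where traj: "trajectory l p f \<epsilon>" and act: "active {0..\<epsilon>} 1 f"
    and van: "\<forall>(v, w)\<in>E. vanishing {0..\<epsilon>} k (\<lambda>t. (norm (f t $ v - f t $ w))\<^sup>2)"
    using assms unfolding flex_def by blast
  then have "0 < \<epsilon>" "real_analytic_on f {0..\<epsilon>}" "f 0 = p"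
    and f_pinned: "\<And>t. t \<in> {0..\<epsilon>} \<Longrightarrow> f t \<in> pinned_space l"
    unfolding trajectory_def pinned_space_def by auto
  then obtain r A where r: "0 < r" "r \<le> \<epsilon>"
    and sums: "\<And>y. 0 \<le> y \<Longrightarrow> y < r \<Longrightarrow> (\<lambda>i. y ^ i *\<^sub>R A i) sums f y"
    using real_analytic_on_powser_at_0 by metis
  have nderiv_f: "nderiv {0..\<epsilon>} n f 0 = fact n *\<^sub>R A n" for n
    by (rule nderiv_powser[OF r sums])
  show ?thesis
  proof
    show "A 0 = p"
      using nderiv_f[of 0] \<open>f 0 = p\<close> by simp
    show "A 1 \<noteq> 0"
      using nderiv_f[of 1] act by (auto simp: active_def vanishing_def le_antisym)
    show "A i \<in> pinned_space l" for i
      by (rule powser_coeffs_in_subspace[OF subspace_pinned_space r(1) sums])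
        (use f_pinned r in auto)
    show "edge_lengths_vanish E k A"
      unfolding edge_lengths_vanish_def
    proof (intro ballI, clarify)
      fix v w n
      assume "(v, w) \<in> E" "n \<in> {1..k}"
      then have "nderiv {0..\<epsilon>} n (\<lambda>t. (norm (f t $ v - f t $ w))\<^sup>2) 0 = 0"
        using van by (auto simp: vanishing_def)
      moreover have "nderiv {0..\<epsilon>} n (\<lambda>t. (norm (f t $ v - f t $ w))\<^sup>2) 0
          = fact n *\<^sub>R (\<Sum>i\<le>n. edge_inner v w (A i) (A (n - i)))"
        by (rule nderiv_powser[OF r sums_sq_edge_length[OF sums]])
      ultimately show "(\<Sum>i\<le>n. edge_inner v w (A i) (A (n - i))) = 0"
        by simp
    qed
  qed
qed

lemma trajectory_polynomial:
  assumes "1 \<le> k" "a 0 = p" "a 1 \<noteq> 0" "\<And>i. a i \<in> pinned_space l"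
  shows "trajectory l p (\<lambda>t. \<Sum>i\<le>k. t ^ i *\<^sub>R a i) 1"
  unfolding trajectory_def
proof (intro conjI ballI)
  show "real_analytic_on (\<lambda>t. \<Sum>i\<le>k. t ^ i *\<^sub>R a i) {0..1}"
    by (rule real_analytic_on_polynomial)
  show "pinned_pos l (\<Sum>i\<le>k. t ^ i *\<^sub>R a i)" for t
  proof -
    have "(\<Sum>i\<le>k. t ^ i *\<^sub>R a i) \<in> pinned_space l"
      by (intro subspace_sum subspace_scale subspace_pinned_space assms(4))
    then show ?thesis
      by (simp add: pinned_space_def)
  qed
  have "{..k} = insert 0 {1..k}"
    by auto
  then show "(\<Sum>i\<le>k. 0 ^ i *\<^sub>R a i) = p"
    using assms(2) by (simp add: power_0_left)
  show "\<exists>t\<in>{0..1}. (\<Sum>i\<le>k. t ^ i *\<^sub>R a i) \<noteq> p"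
  proof (rule ccontr)
    assume const: "\<not> (\<exists>t\<in>{0..1}. (\<Sum>i\<le>k. t ^ i *\<^sub>R a i) \<noteq> p)"
    define G where "G t = (\<Sum>i\<le>k. t ^ i *\<^sub>R a i)" for t
    have "(\<lambda>i. y ^ i *\<^sub>R (if i = 0 then p else 0)) sums G y" if "0 \<le> y" "y < 1" for y
      using const that sums_finite[of "{0}" "\<lambda>i. y ^ i *\<^sub>R (if i = 0 then p else 0)"] by (auto simp: G_def)
    then have "(\<lambda>i. if i \<le> k then a i else 0) = (\<lambda>i. if i = 0 then p else 0)"
      by (intro powser_coeffs_unique[of 1 _ G]) (auto simp: G_def sums_polynomial)
    then show False
      using assms(1,3) by (metis one_neq_zero)
  qed
qed simp

lemma flex_polynomial:
  assumes "1 \<le> k" "a 0 = p" "a 1 \<noteq> 0" "\<And>i. a i \<in> pinned_space l"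
    and "edge_lengths_vanish E k a"
  shows "flex E l p 1 k (\<lambda>t. p + (\<Sum>i\<in>{1..k}. t ^ i *\<^sub>R a i))"
proof -
  define b where "b i = (if i \<le> k then a i else 0)" for i
  define G where "G t = (\<Sum>i\<le>k. t ^ i *\<^sub>R a i)" for t
  have G_eq: "(\<lambda>t. p + (\<Sum>i\<in>{1..k}. t ^ i *\<^sub>R a i)) = G"
  proof
    fix t
    have "{..k} = insert 0 {1..k}"
      by auto
    then show "p + (\<Sum>i\<in>{1..k}. t ^ i *\<^sub>R a i) = G t"
      by (simp add: G_def \<open>a 0 = p\<close>)
  qed
  have sums: "(\<lambda>i. y ^ i *\<^sub>R b i) sums G y" for y
    unfolding b_def G_def by (rule sums_polynomial)
  have "trajectory l p G 1"
    unfolding G_def[abs_def] by (rule trajectory_polynomial[OF assms(1-4)])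
  moreover have "active {0..1} 1 G"
    using nderiv_powser[of 1 1 b G 1] sums assms(1,3)
    by (auto simp: active_def vanishing_def b_def le_antisym)
  moreover have "vanishing {0..1} k (\<lambda>t. (norm (G t $ v - G t $ w))\<^sup>2)" if "(v, w) \<in> E" for v w
  proof -
    have "edge_lengths_vanish E k b"
      using assms(5) edge_lengths_vanish_cong[of k b a E] by (simp add: b_def)
    then have "(\<Sum>i\<le>n. edge_inner v w (b i) (b (n - i))) = 0" if "n \<in> {1..k}" for n
      using that \<open>(v, w) \<in> E\<close> by (auto simp: edge_lengths_vanish_def)
    moreover have "nderiv {0..1} n (\<lambda>t. (norm (G t $ v - G t $ w))\<^sup>2) 0
        = fact n *\<^sub>R (\<Sum>i\<le>n. edge_inner v w (b i) (b (n - i)))" for n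
      by (rule nderiv_powser[of 1]) (use sums_sq_edge_length[OF sums] in auto)
    ultimately show ?thesis
      by (simp add: vanishing_def)
  qed
  ultimately show ?thesis
    unfolding G_eq flex_def by blast
qed

lemma coeff1_in_Kspace:
  assumes "edge_lengths_vanish E k a" "1 \<le> k" "a 0 = p" "a 1 \<in> pinned_space l"
  shows "a 1 \<in> Kspace E l p"
proof -
  have "(p $ v - p $ w) \<bullet> (a 1 $ v - a 1 $ w) = 0" if "(v, w) \<in> E" for v w
  proof -
    have "\<forall>n\<in>{1..k}. (\<Sum>i\<le>n. edge_inner v w (a i) (a (n - i))) = 0"
      using assms(1) that by (auto simp: edge_lengths_vanish_def)
    from bspec[OF this, of 1] have "(\<Sum>i\<le>1. edge_inner v w (a i) (a (1 - i))) = 0"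
      using assms(2) by simp
    then show ?thesis
      using assms(3) by (simp add: edge_inner_def inner_commute)
  qed
  then show ?thesis
    using assms(4) by (auto simp: Kspace_def pinned_space_def)
qed

text \<open>A polynomial path \<open>t \<mapsto> \<Sum>i. t ^ i *\<^sub>R a i\<close> of configurations is encoded by its coordinate
  polynomials \<open>Q v c\<close>, so that reparametrising it by a polynomial \<open>s\<close> is composition with \<open>s\<close>.\<close>

definition config_coeff :: "('n::finite \<Rightarrow> 'd::finite \<Rightarrow> real poly) \<Rightarrow> nat \<Rightarrow> real^'d^'n" where
  "config_coeff Q i = (\<chi> v c. coeff (Q v c) i)"

definition edge_length_poly :: "'n \<Rightarrow> 'n \<Rightarrow> ('n \<Rightarrow> 'd::finite \<Rightarrow> real poly) \<Rightarrow> real poly" where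
  "edge_length_poly v w Q = (\<Sum>c\<in>UNIV. (Q v c - Q w c) ^ 2)"

lemma config_coeff_nth [simp]: "config_coeff Q i $ v $ c = coeff (Q v c) i"
  by (simp add: config_coeff_def)

lemma config_coeff_sum_monom:
  "config_coeff (\<lambda>v c. \<Sum>i\<le>k. monom (A i $ v $ c) i) j = (if j \<le> k then A j else 0)"
  by (auto simp: vec_eq_iff coeff_sum coeff_monom)

lemma coeff_edge_length_poly:
  "coeff (edge_length_poly v w Q) n
    = (\<Sum>i\<le>n. edge_inner v w (config_coeff Q i) (config_coeff Q (n - i)))"
  by (simp add: edge_length_poly_def power2_eq_square coeff_sum coeff_mult edge_inner_def
      inner_vec_def sum_distrib_left flip: sum.swap[of _ UNIV])

lemma edge_length_poly_pcompose:
  "edge_length_poly v w (\<lambda>v c. Q v c \<circ>\<^sub>p s) = edge_length_poly v w Q \<circ>\<^sub>p s"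
  by (simp add: edge_length_poly_def pcompose_sum pcompose_power pcompose_diff)

lemma edge_lengths_vanish_pcompose:
  assumes "edge_lengths_vanish E k (config_coeff Q)" "coeff s 0 = 0"
  shows "edge_lengths_vanish E k (config_coeff (\<lambda>v c. Q v c \<circ>\<^sub>p s))"
  unfolding edge_lengths_vanish_def
proof (intro ballI, clarify)
  fix v w n
  assume "(v, w) \<in> E" "n \<in> {1..k}"
  then have "coeff (edge_length_poly v w Q) j = 0" if "j \<in> {1..k}" for j
    using assms(1) that by (auto simp: edge_lengths_vanish_def coeff_edge_length_poly)
  then have "coeff (edge_length_poly v w Q \<circ>\<^sub>p s) n = 0"
    using coeff_pcompose_eq_0 assms(2) \<open>n \<in> {1..k}\<close> by blast
  then show "(\<Sum>i\<le>n. edge_inner v w (config_coeff (\<lambda>v c. Q v c \<circ>\<^sub>p s) i)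
      (config_coeff (\<lambda>v c. Q v c \<circ>\<^sub>p s) (n - i))) = 0"
    by (simp add: edge_length_poly_pcompose flip: coeff_edge_length_poly)
qed

lemma config_coeff_pcompose_in_subspace:
  assumes "subspace S" "\<And>j. config_coeff Q j \<in> S"
  shows "config_coeff (\<lambda>v c. Q v c \<circ>\<^sub>p s) i \<in> S"
proof -
  define N where "N = Max (range (\<lambda>(v, c). degree (Q v c)))"
  have deg: "degree (Q v c) \<le> N" for v c
    unfolding N_def by (rule Max_ge) auto
  have "config_coeff (\<lambda>v c. Q v c \<circ>\<^sub>p s) i = (\<Sum>j\<le>N. coeff (s ^ j) i *\<^sub>R config_coeff Q j)"
    by (simp add: vec_eq_iff sum_component coeff_pcompose_expand[OF deg] mult.commute)
  also have "\<dots> \<in> S"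
    by (intro subspace_sum subspace_scale assms)
  finally show ?thesis .
qed

lemma config_coeff_pcompose_X_plus_monom:
  assumes "2 \<le> m" "j \<le> m"
  shows "config_coeff (\<lambda>v c. Q v c \<circ>\<^sub>p ([:0, 1:] + monom \<mu> m)) j
    = config_coeff Q j + (if j = m then \<mu> *\<^sub>R config_coeff Q 1 else 0)"
  using assms by (simp add: vec_eq_iff coeff_pcompose_X_plus_monom)

lemma config_coeff_reparametrize_step:
  fixes \<mu> :: real
  assumes "2 \<le> m" "subspace S" "\<And>j. config_coeff Q j \<in> S" "edge_lengths_vanish E k (config_coeff Q)"
  defines "Q' \<equiv> \<lambda>v c. Q v c \<circ>\<^sub>p ([:0, 1:] + monom (- \<mu>) m)"
  shows "\<And>j. j < m \<Longrightarrow> config_coeff Q' j = config_coeff Q j"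
    and "config_coeff Q' m = config_coeff Q m - \<mu> *\<^sub>R config_coeff Q 1"
    and "\<And>j. config_coeff Q' j \<in> S"
    and "edge_lengths_vanish E k (config_coeff Q')"
proof -
  show "config_coeff Q' j = config_coeff Q j" if "j < m" for j
    using config_coeff_pcompose_X_plus_monom[where m = m and j = j and Q = Q and \<mu> = "- \<mu>"]
      assms(1) that by (simp add: Q'_def)
  show "config_coeff Q' m = config_coeff Q m - \<mu> *\<^sub>R config_coeff Q 1"
    using config_coeff_pcompose_X_plus_monom[where m = m and j = m and Q = Q and \<mu> = "- \<mu>"]
      assms(1) by (simp add: Q'_def)
  show "config_coeff Q' j \<in> S" for j
    unfolding Q'_def by (rule config_coeff_pcompose_in_subspace[OF assms(2,3)])
  show "edge_lengths_vanish E k (config_coeff Q')"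
    unfolding Q'_def using assms(1,4) by (intro edge_lengths_vanish_pcompose) simp_all
qed

lemma reparametrize_coeffs_into_complement:
  fixes Q :: "'n::finite \<Rightarrow> 'd::finite \<Rightarrow> real poly"
  assumes "subspace S" "\<And>j. config_coeff Q j \<in> S" "edge_lengths_vanish E k (config_coeff Q)"
    and decomp: "\<And>x. x \<in> S \<Longrightarrow> \<exists>\<mu>. x - \<mu> *\<^sub>R config_coeff Q 1 \<in> T"
  shows "\<exists>Q'. config_coeff Q' 0 = config_coeff Q 0 \<and> config_coeff Q' 1 = config_coeff Q 1 \<and>
    (\<forall>j. config_coeff Q' j \<in> S) \<and> edge_lengths_vanish E k (config_coeff Q') \<and>
    (\<forall>j\<in>{2..<m}. config_coeff Q' j \<in> T)"
proof (induction m)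
  case 0
  show ?case
    using assms by auto
next
  case (Suc m)
  then obtain Q' where Q': "config_coeff Q' 0 = config_coeff Q 0" "config_coeff Q' 1 = config_coeff Q 1"
    "\<forall>j. config_coeff Q' j \<in> S" "edge_lengths_vanish E k (config_coeff Q')"
    "\<forall>j\<in>{2..<m}. config_coeff Q' j \<in> T"
    by blast
  show ?case
  proof (cases "m < 2")
    case True
    then show ?thesis
      using Q' by (intro exI[of _ Q']) auto
  next
    case False
    then have "2 \<le> m"
      by simp
    have Q'_in_S: "config_coeff Q' j \<in> S" for j
      using Q'(3) by blast
    obtain \<mu> where \<mu>: "config_coeff Q' m - \<mu> *\<^sub>R config_coeff Q 1 \<in> T"
      using decomp Q'_in_S by blast
    define Q'' where "Q'' = (\<lambda>v c. Q' v c \<circ>\<^sub>p ([:0, 1:] + monom (- \<mu>) m))"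
    note step = config_coeff_reparametrize_step[OF \<open>2 \<le> m\<close> assms(1) Q'_in_S Q'(4),
        where \<mu> = \<mu>, folded Q''_def]
    have "config_coeff Q'' j \<in> T" if "j \<in> {2..<Suc m}" for j
      using that step(1,2) Q'(2,5) \<mu> by (cases "j = m") auto
    then show ?thesis
      using step \<open>2 \<le> m\<close> Q'(1,2) by (intro exI[of _ Q'']) auto
  qed
qed

lemma coeffs_into_complement:
  fixes A :: "nat \<Rightarrow> real^'d::finite^'n::finite"
  assumes "subspace S" "\<And>i. A i \<in> S" "edge_lengths_vanish E k A"
    and "\<And>x. x \<in> S \<Longrightarrow> \<exists>\<mu>. x - \<mu> *\<^sub>R A 1 \<in> T"
  obtains a where "a 0 = A 0" "a 1 = A 1" "\<And>i. a i \<in> S" "edge_lengths_vanish E k a"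
    "\<And>i. i \<in> {2..k} \<Longrightarrow> a i \<in> T"
proof -
  define Q where "Q v c = (\<Sum>i\<le>Suc k. monom (A i $ v $ c) i)" for v c
  have Q_coeff: "config_coeff Q i = (if i \<le> Suc k then A i else 0)" for i
    unfolding Q_def by (rule config_coeff_sum_monom)
  have "edge_lengths_vanish E k (config_coeff Q)"
    using assms(3) edge_lengths_vanish_cong[of k "config_coeff Q" A E] by (simp add: Q_coeff)
  moreover have "config_coeff Q j \<in> S" for j
    using assms(1,2) by (simp add: Q_coeff subspace_0)
  moreover have "\<exists>\<mu>. x - \<mu> *\<^sub>R config_coeff Q 1 \<in> T" if "x \<in> S" for x
    using assms(4) that by (simp add: Q_coeff)
  ultimately obtain Q' where Q': "config_coeff Q' 0 = config_coeff Q 0"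
    "config_coeff Q' 1 = config_coeff Q 1" "\<forall>i. config_coeff Q' i \<in> S"
    "edge_lengths_vanish E k (config_coeff Q')" "\<forall>i\<in>{2..<Suc k}. config_coeff Q' i \<in> T"
    using reparametrize_coeffs_into_complement[OF assms(1), of Q E k T "Suc k"] by blast
  show ?thesis
    by (rule that[of "config_coeff Q'"]) (use Q' in \<open>auto simp: Q_coeff\<close>)
qed

theorem lemma2p21:
  fixes E :: "('n::{finite,linorder} \<times> 'n) set"
    and p :: "real^'d::{finite,linorder}^'n::{finite,linorder}"
    and l k :: nat
    and Kbar :: "(real^'d::{finite,linorder}^'n::{finite,linorder}) set"
    and f :: "real \<Rightarrow> real^'d::{finite,linorder}^'n::{finite,linorder}"
  assumes "is_framework E p"
    and "aff_dim (range (\<lambda>v. p $ v)) = int l"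
    and "pinned_config l p"
    and "dim (Kspace E l p) = 1"
    and "subspace Kbar" and "Kbar \<subseteq> pinned_space l"
    and "Kspace E l p \<inter> Kbar = {0}"
    and "{x + y | x y. x \<in> Kspace E l p \<and> y \<in> Kbar} = pinned_space l"
    and "k \<ge> 1"
    and "flex E l p 1 k f"
  shows "\<exists>a::nat \<Rightarrow> real^'d::{finite,linorder}^'n::{finite,linorder}.
           flex E l p 1 k (\<lambda>t. p + (\<Sum>i\<in>{1..k}. t ^ i *\<^sub>R a i)) \<and>
           (\<forall>i\<in>{2..k}. a i \<in> Kbar)"
proof -
  obtain A where "A 0 = p" "A 1 \<noteq> 0" and A_pinned: "\<And>i. A i \<in> pinned_space l"
    and "edge_lengths_vanish E k A"
    using flex_powser_coeffs[OF \<open>flex E l p 1 k f\<close>] by blast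
  have "A 1 \<in> Kspace E l p"
    by (rule coeff1_in_Kspace[OF \<open>edge_lengths_vanish E k A\<close> \<open>k \<ge> 1\<close> \<open>A 0 = p\<close> A_pinned])
  have decomp: "\<exists>\<mu>. x - \<mu> *\<^sub>R A 1 \<in> Kbar" if "x \<in> pinned_space l" for x
    by (rule dim_1_decomp[OF \<open>dim (Kspace E l p) = 1\<close> \<open>A 1 \<in> Kspace E l p\<close> \<open>A 1 \<noteq> 0\<close>])
      (use that in \<open>simp only: assms(8)\<close>)
  obtain a where a: "a 0 = A 0" "a 1 = A 1" "\<And>i. a i \<in> pinned_space l"
    "edge_lengths_vanish E k a" "\<And>i. i \<in> {2..k} \<Longrightarrow> a i \<in> Kbar"
    using coeffs_into_complement[OF subspace_pinned_space A_pinned \<open>edge_lengths_vanish E k A\<close> decomp]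
    by blast
  have "flex E l p 1 k (\<lambda>t. p + (\<Sum>i\<in>{1..k}. t ^ i *\<^sub>R a i))"
    by (rule flex_polynomial) (use a \<open>A 0 = p\<close> \<open>A 1 \<noteq> 0\<close> \<open>k \<ge> 1\<close> in auto)
  then show ?thesis
    using a(5) by blast
qed

end
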